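(* (Optimality within horizon.) Given a start location (product-graph state) $l_0$ of the robot at current time $t_0$ and a horizon length $H$, the plan generated by $\textsf{DT*}$ is optimal in terms of the number of cycles completed within the horizon: among all decision sequences consisting of shortest prefix paths and shortest suffix cycles in the reduced product graph starting at $l_0$ at time $t_0$ (with time-dependent edge costs reflecting the known dynamic obstacles), none completes more suffix cycles in the time interval $[t_0,t_0+H]$ than the generated plan.
   Context: Setting: a robot moves in a 2D grid modelled by a weighted transition system $T$ (cells, obstacle cells, moves left/right/up/down with positive time costs, atomic propositions labelling cells); an LTL task $\phi$ has B\"uchi automaton $B_\phi$ with accepting states $F$; the product graph of $T$ and $B_\phi$ is reduced to a graph $G_r=(V_r,v_0,E_r,F_r,w_r)$, $V_r\subseteq S_T\times S_B$, $F_r$ the nodes whose automaton component is in $F$, where edges represent shortest paths in the product graph. Dynamic obstacles make some cells unavailable for known time intervals, so edge costs are time-dependent (including waiting). From a node $l_i$ at time $t_i$ the available decisions are: traverse a shortest prefix path to some destination node $l_j\in F_r$, arriving at time $t_j$; or, if $l_i\in F_r$, traverse a shortest cycle from $l_i$ back to $l_i$, arriving at $t_j$ (this completes a cycle). $\textsf{DT*}$ encodes all such decision sequences starting at $l_0$ at time $t_0$ within the horizon $[t_0,t_0+H]$ as SMT constraints (Boolean variables $X_{l t}$ for being at $l$ at time $t$, exactly one successor decision per visited node, at most one location per time, no decision at intermediate times of an ongoing traversal) and asks the solver to lexicographically maximize the number of completed cycles, then minimize the length of the last completed cycle, then minimize the completion time of the last cycle. *)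

theory Defs
  imports Main
begin

text \<open>Abstract model of the reduced product graph G_r = (V_r, v_0, E_r, F_r, w_r)
  with time-dependent traversal times.
  A decision at a node l at time t is either a shortest prefix path to a
  destination node l' in F_r, or (if l is in F_r) a shortest suffix cycle
  from l back to l.\<close>

datatype 'v decision = Prefix 'v | Cycle

fun target :: "'v \<Rightarrow> 'v decision \<Rightarrow> 'v" where
  "target l (Prefix l') = l'"
| "target l Cycle = l"

fun is_cycle :: "'v decision \<Rightarrow> bool" where
  "is_cycle (Prefix _) = False"
| "is_cycle Cycle = True"

fun available :: "'v set \<Rightarrow> 'v \<Rightarrow> 'v decision \<Rightarrow> bool" where
  "available F l (Prefix l') = (l' \<in> F)"
| "available F l Cycle = (l \<in> F)"

text \<open>arr l t d = Some t' : executing decision d from node l at time t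
  (shortest path in the product graph under the known dynamic obstacles,
  waiting included) arrives at time t'; None if impossible.\<close>
type_synonym 'v arrival = "'v \<Rightarrow> nat \<Rightarrow> 'v decision \<Rightarrow> nat option"

fun valid_seq :: "'v set \<Rightarrow> 'v arrival \<Rightarrow> nat \<Rightarrow> 'v \<Rightarrow> nat \<Rightarrow> 'v decision list \<Rightarrow> bool" where
  "valid_seq F arr tend l t [] = True"
| "valid_seq F arr tend l t (d # ds) =
     (available F l d \<and>
      (\<exists>t'. arr l t d = Some t' \<and> t' \<le> tend \<and> valid_seq F arr tend (target l d) t' ds))"

definition num_cycles :: "'v decision list \<Rightarrow> nat" where
  "num_cycles ds = length (filter is_cycle ds)"

text \<open>The SMT encoding of DT*: Boolean variables X l t (robot at node l at
  time t) and D l t d (decision d taken at node l at time t).\<close>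
definition dt_model ::
  "'v set \<Rightarrow> 'v set \<Rightarrow> 'v arrival \<Rightarrow> 'v \<Rightarrow> nat \<Rightarrow> nat
   \<Rightarrow> ('v \<Rightarrow> nat \<Rightarrow> bool) \<Rightarrow> ('v \<Rightarrow> nat \<Rightarrow> 'v decision \<Rightarrow> bool) \<Rightarrow> bool" where
  "dt_model V F arr l0 t0 H X D \<longleftrightarrow>
     X l0 t0
   \<and> (\<forall>l t. X l t \<longrightarrow> l \<in> V \<and> t0 \<le> t \<and> t \<le> t0 + H)
   \<comment> \<open>at most one location per time\<close>
   \<and> (\<forall>l l' t. X l t \<and> X l' t \<longrightarrow> l = l')
   \<comment> \<open>a decision is taken only at a visited node, is available, and leads
       within the horizon to the visited destination\<close>
   \<and> (\<forall>l t d. D l t d \<longrightarrow> X l t \<and> available F l d \<and>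
        (\<exists>t'. arr l t d = Some t' \<and> t' \<le> t0 + H \<and> X (target l d) t'))
   \<comment> \<open>at most one successor decision per visited node\<close>
   \<and> (\<forall>l t d d'. D l t d \<and> D l t d' \<longrightarrow> d = d')
   \<comment> \<open>every visited node except the final one has a successor decision\<close>
   \<and> (\<forall>l t. X l t \<and> (\<exists>l' t'. t < t' \<and> X l' t') \<longrightarrow> (\<exists>d. D l t d))
   \<comment> \<open>no location is occupied at intermediate times of an ongoing traversal\<close>
   \<and> (\<forall>l t d t' l' s. D l t d \<and> arr l t d = Some t' \<and> t < s \<and> s < t' \<longrightarrow> \<not> X l' s)"

definition model_cycles :: "('v \<Rightarrow> nat \<Rightarrow> 'v decision \<Rightarrow> bool) \<Rightarrow> nat" where
  "model_cycles D = card {(l, t). D l t Cycle}"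

definition last_cycle_start :: "('v \<Rightarrow> nat \<Rightarrow> 'v decision \<Rightarrow> bool) \<Rightarrow> nat" where
  "last_cycle_start D = (if \<exists>l t. D l t Cycle then Max {t. \<exists>l. D l t Cycle} else 0)"

definition last_cycle_end :: "'v arrival \<Rightarrow> ('v \<Rightarrow> nat \<Rightarrow> 'v decision \<Rightarrow> bool) \<Rightarrow> nat" where
  "last_cycle_end arr D = (if \<exists>l t. D l t Cycle then
      the (arr (THE l. D l (last_cycle_start D) Cycle) (last_cycle_start D) Cycle) else 0)"

definition last_cycle_length :: "'v arrival \<Rightarrow> ('v \<Rightarrow> nat \<Rightarrow> 'v decision \<Rightarrow> bool) \<Rightarrow> nat" where
  "last_cycle_length arr D = last_cycle_end arr D - last_cycle_start D"

definition lex_better_eq ::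
  "'v arrival \<Rightarrow> ('v \<Rightarrow> nat \<Rightarrow> 'v decision \<Rightarrow> bool) \<Rightarrow> ('v \<Rightarrow> nat \<Rightarrow> 'v decision \<Rightarrow> bool) \<Rightarrow> bool" where
  "lex_better_eq arr D D' \<longleftrightarrow>
     model_cycles D > model_cycles D'
   \<or> (model_cycles D = model_cycles D' \<and>
       (last_cycle_length arr D < last_cycle_length arr D'
        \<or> (last_cycle_length arr D = last_cycle_length arr D' \<and>
            last_cycle_end arr D \<le> last_cycle_end arr D')))"

definition dtstar_plan ::
  "'v set \<Rightarrow> 'v set \<Rightarrow> 'v arrival \<Rightarrow> 'v \<Rightarrow> nat \<Rightarrow> nat
   \<Rightarrow> ('v \<Rightarrow> nat \<Rightarrow> bool) \<Rightarrow> ('v \<Rightarrow> nat \<Rightarrow> 'v decision \<Rightarrow> bool) \<Rightarrow> bool" where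
  "dtstar_plan V F arr l0 t0 H X D \<longleftrightarrow>
     dt_model V F arr l0 t0 H X D \<and>
     (\<forall>X' D'. dt_model V F arr l0 t0 H X' D' \<longrightarrow> lex_better_eq arr D D')"

end

theory Submission
  imports Defs
begin

text \<open>Every decision sequence that fits into the horizon is encoded by a model of the
  DT* constraints with the same number of cycles: its decisions are prepended one at a
  time, and the constraints of the encoded tail survive because the tail takes place
  strictly after the new first decision.  Since the number of cycles is the first
  component of the lexicographic objective, the DT* plan has at least as many.\<close>

lemma dt_modelI:
  assumes "X l0 t0"
    and "\<And>l t. X l t \<Longrightarrow> l \<in> V \<and> t0 \<le> t \<and> t \<le> t0 + H"
    and "\<And>l l' t. X l t \<Longrightarrow> X l' t \<Longrightarrow> l = l'"
    and "\<And>l t d. D l t d \<Longrightarrow> X l t \<and> available F l d \<and>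
           (\<exists>t'. arr l t d = Some t' \<and> t' \<le> t0 + H \<and> X (target l d) t')"
    and "\<And>l t d d'. D l t d \<Longrightarrow> D l t d' \<Longrightarrow> d = d'"
    and "\<And>l t l' t'. X l t \<Longrightarrow> t < t' \<Longrightarrow> X l' t' \<Longrightarrow> \<exists>d. D l t d"
    and "\<And>l t d t' l' s. D l t d \<Longrightarrow> arr l t d = Some t' \<Longrightarrow> t < s \<Longrightarrow> s < t' \<Longrightarrow> \<not> X l' s"
  shows "dt_model V F arr l0 t0 H X D"
  unfolding dt_model_def using assms by (intro conjI allI impI; (elim conjE exE)?; metis)

lemma dt_model_decision_after_start:
  assumes "dt_model V F arr l0 t0 H X D" and "D l t d"
  shows "t0 \<le> t"
  using assms unfolding dt_model_def by (elim conjE) blast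

lemma dt_model_prepend:
  assumes model: "dt_model V F arr (target l d) t' (t + H - t') X D"
    and "l \<in> V" and "available F l d" and arr: "arr l t d = Some t'"
    and "t < t'" and "t' \<le> t + H"
  shows "dt_model V F arr l t H
           (\<lambda>l' s. (l', s) = (l, t) \<or> X l' s) (\<lambda>l' s e. (l', s, e) = (l, t, d) \<or> D l' s e)"
    (is "dt_model _ _ _ _ _ _ ?X' ?D'")
proof -
  have horizon: "t' + (t + H - t') = t + H"
    using \<open>t' \<le> t + H\<close> by simp
  from model obtain
      start: "X (target l d) t'"
    and bounds: "\<And>l s. X l s \<Longrightarrow> l \<in> V \<and> t' \<le> s \<and> s \<le> t + H"
    and unique_loc: "\<And>l l' s. X l s \<Longrightarrow> X l' s \<Longrightarrow> l = l'"
    and decision: "\<And>l s e. D l s e \<Longrightarrow> X l s \<and> available F l e \<and>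
        (\<exists>s'. arr l s e = Some s' \<and> s' \<le> t + H \<and> X (target l e) s')"
    and unique_dec: "\<And>l s e e'. D l s e \<Longrightarrow> D l s e' \<Longrightarrow> e = e'"
    and successor: "\<And>l s l' s'. X l s \<Longrightarrow> s < s' \<Longrightarrow> X l' s' \<Longrightarrow> \<exists>e. D l s e"
    and no_overlap: "\<And>l s e s' l' r. D l s e \<Longrightarrow> arr l s e = Some s' \<Longrightarrow> s < r \<Longrightarrow> r < s' \<Longrightarrow> \<not> X l' r"
    unfolding dt_model_def horizon by (elim conjE) blast
  have later: "X l' s \<Longrightarrow> t < s" "D l' s e \<Longrightarrow> t < s" for l' s e
    using bounds decision \<open>t < t'\<close> by (meson less_le_trans)+
  have "?X' l t" by simp
  moreover have "?X' l1 s \<Longrightarrow> l1 \<in> V \<and> t \<le> s \<and> s \<le> t + H" for l1 s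
    using bounds \<open>l \<in> V\<close> \<open>t < t'\<close> \<open>t' \<le> t + H\<close> by fastforce
  moreover have "?X' l1 s \<Longrightarrow> ?X' l2 s \<Longrightarrow> l1 = l2" for l1 l2 s
    using unique_loc later by blast
  moreover have "?D' l1 s e \<Longrightarrow> ?X' l1 s \<and> available F l1 e \<and>
      (\<exists>s'. arr l1 s e = Some s' \<and> s' \<le> t + H \<and> ?X' (target l1 e) s')" for l1 s e
    using decision \<open>available F l d\<close> arr \<open>t' \<le> t + H\<close> start by blast
  moreover have "?D' l1 s e \<Longrightarrow> ?D' l1 s e' \<Longrightarrow> e = e'" for l1 s e e'
    using unique_dec later by blast
  moreover have "\<exists>e. ?D' l1 s e" if "?X' l1 s" "s < s'" "?X' l2 s'" for l1 l2 s s'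
  proof (cases "(l1, s) = (l, t)")
    case False
    with that have "X l1 s" "X l2 s'"
      using later by (auto dest: less_trans)
    then show ?thesis using successor \<open>s < s'\<close> by blast
  qed auto
  moreover have "\<not> ?X' l2 r" if "?D' l1 s e" "arr l1 s e = Some s'" "s < r" "r < s'"
    for l1 s e s' l2 r
  proof (cases "(l1, s, e) = (l, t, d)")
    case True
    with that arr have "t < r" "r < t'" by auto
    then show ?thesis by (auto dest: bounds)
  next
    case False
    with that have dec: "D l1 s e" by auto
    with later(2) \<open>s < r\<close> have "t < r" by (meson less_trans)
    then show ?thesis using no_overlap[OF dec that(2-4)] by simp
  qed
  ultimately show ?thesis
    by (rule dt_modelI)
qed

lemma dt_model_of_valid_seq:
  assumes arrival_later: "\<And>l t d t'. arr l t d = Some t' \<Longrightarrow> t < t'"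
    and target_closed: "\<And>l t d t'. l \<in> V \<Longrightarrow> available F l d \<Longrightarrow> arr l t d = Some t' \<Longrightarrow> target l d \<in> V"
  shows "valid_seq F arr (t + H) l t ds \<Longrightarrow> l \<in> V \<Longrightarrow>
    \<exists>X D. dt_model V F arr l t H X D \<and> finite {(l, t). D l t Cycle} \<and> model_cycles D = num_cycles ds"
  \<comment> \<open>finiteness is carried along since \<open>card\<close> is 0 on infinite sets\<close>
proof (induction ds arbitrary: l t H)
  case Nil
  have "dt_model V F arr l t H (\<lambda>l' s. (l', s) = (l, t)) (\<lambda>_ _ _. False)"
    using Nil.prems(2) by (intro dt_modelI) auto
  then show ?case by (force simp: model_cycles_def num_cycles_def)
next
  case (Cons d ds)
  from Cons.prems obtain t' where "available F l d" and arr: "arr l t d = Some t'"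
    and "t' \<le> t + H" and tail: "valid_seq F arr (t + H) (target l d) t' ds"
    by auto
  have "t < t'" using arrival_later arr .
  have "target l d \<in> V" using target_closed Cons.prems(2) \<open>available F l d\<close> arr .
  moreover have "valid_seq F arr (t' + (t + H - t')) (target l d) t' ds"
    using tail \<open>t' \<le> t + H\<close> by simp
  ultimately obtain X D where model: "dt_model V F arr (target l d) t' (t + H - t') X D"
    and finite_cycles: "finite {(l, t). D l t Cycle}" and count: "model_cycles D = num_cycles ds"
    using Cons.IH by blast
  let ?D' = "\<lambda>l' s e. (l', s, e) = (l, t, d) \<or> D l' s e"
  have "(l, t) \<notin> {(l, t). D l t Cycle}"
    using dt_model_decision_after_start[OF model] \<open>t < t'\<close> by fastforce
  moreover have "{(l', s). ?D' l' s Cycle} =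
      (if is_cycle d then insert (l, t) else id) {(l, t). D l t Cycle}"
    by (cases d) auto
  ultimately have "finite {(l', s). ?D' l' s Cycle} \<and> model_cycles ?D' = num_cycles (d # ds)"
    using finite_cycles count by (cases d) (simp_all add: model_cycles_def num_cycles_def)
  moreover have "dt_model V F arr l t H (\<lambda>l' s. (l', s) = (l, t) \<or> X l' s) ?D'"
    using dt_model_prepend[OF model Cons.prems(2) \<open>available F l d\<close> arr \<open>t < t'\<close> \<open>t' \<le> t + H\<close>] .
  ultimately show ?case by blast
qed

lemma model_cycles_le_dtstar_plan:
  assumes "dtstar_plan V F arr l0 t0 H X D" and "dt_model V F arr l0 t0 H X' D'"
  shows "model_cycles D' \<le> model_cycles D"
  using assms unfolding dtstar_plan_def lex_better_eq_def by fastforce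

theorem theorem2:
  fixes V F :: "'v set" and arr :: "'v arrival" and l0 :: 'v and t0 H :: nat
    and X :: "'v \<Rightarrow> nat \<Rightarrow> bool" and D :: "'v \<Rightarrow> nat \<Rightarrow> 'v decision \<Rightarrow> bool"
    and ds :: "'v decision list"
  assumes "finite V" and "F \<subseteq> V" and "l0 \<in> V"
    and "\<And>l t d t'. arr l t d = Some t' \<Longrightarrow> t < t'"
    and "\<And>l t d t'. l \<in> V \<Longrightarrow> available F l d \<Longrightarrow> arr l t d = Some t' \<Longrightarrow> target l d \<in> V"
    and "dtstar_plan V F arr l0 t0 H X D"
    and "valid_seq F arr (t0 + H) l0 t0 ds"
  shows "num_cycles ds \<le> model_cycles D"
proof -
  obtain X' D' where "dt_model V F arr l0 t0 H X' D'" and "model_cycles D' = num_cycles ds"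
    using dt_model_of_valid_seq[of arr V F t0 H l0 ds] assms(3-5,7) by blast
  then show ?thesis
    using model_cycles_le_dtstar_plan[OF assms(6)] by metis
qed

end
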